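(* Let $p$ be a lattice norm on $\mathbb{R}^2$ with $p((1,0))=1$ and let $\Phi$ be an Orlicz function satisfying $\lim_{u\to+\infty}\Phi(u)/u=+\infty$. Then for every $x\in L^\Phi(\mu)\setminus\{0\}$ there exists $l\in(0,+\infty)$ such that $$\|x\|_{\Phi,p}=\frac1l\,p\big((1,I_\Phi(lx))\big).$$
   Context: $(\Omega,\Sigma,\mu)$ is a $\sigma$-finite complete measure space, $L^0$ the space of (classes of a.e. equal) real measurable functions. An Orlicz function is a function $\Phi:\mathbb{R}\to[0,\infty)$ which is convex, even, vanishes at $0$ and is not identically zero. $I_\Phi(x)=\int_\Omega\Phi(x(t))\,d\mu\in[0,+\infty]$; $L^\Phi(\mu)=\{x\in L^0: I_\Phi(\lambda x)<\infty\text{ for some }\lambda>0\}$. A lattice norm on $\mathbb{R}^2$ is a norm $p$ with $p((u,v))\le p((u',v'))$ whenever $|u|\le|u'|,|v|\le|v'|$. For such $p$ with $p((1,0))=1$, $\|x\|_{\Phi,p}=\inf_{k>0}\frac1k p((1,I_\Phi(kx)))$ for $x\in L^\Phi(\mu)$, with the convention $p((1,+\infty))=+\infty$. *)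

theory Defs
  imports "HOL-Analysis.Analysis"
begin

definition orlicz_function :: "(real \<Rightarrow> real) \<Rightarrow> bool" where
  "orlicz_function \<Phi> \<longleftrightarrow> convex_on UNIV \<Phi> \<and> (\<forall>u. \<Phi> (-u) = \<Phi> u) \<and> (\<forall>u. \<Phi> u \<ge> 0)
     \<and> \<Phi> 0 = 0 \<and> (\<exists>u. \<Phi> u \<noteq> 0)"

definition lattice_norm :: "(real \<times> real \<Rightarrow> real) \<Rightarrow> bool" where
  "lattice_norm p \<longleftrightarrow>
     (\<forall>v. p v = 0 \<longleftrightarrow> v = (0,0)) \<and>
     (\<forall>c u v. p (c * u, c * v) = \<bar>c\<bar> * p (u, v)) \<and>
     (\<forall>u v u' v'. p (u + u', v + v') \<le> p (u, v) + p (u', v')) \<and>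
     (\<forall>u v u' v'. \<bar>u\<bar> \<le> \<bar>u'\<bar> \<and> \<bar>v\<bar> \<le> \<bar>v'\<bar> \<longrightarrow> p (u, v) \<le> p (u', v'))"

definition orlicz_modular :: "'a measure \<Rightarrow> (real \<Rightarrow> real) \<Rightarrow> ('a \<Rightarrow> real) \<Rightarrow> ennreal" where
  "orlicz_modular M \<Phi> x = (\<integral>\<^sup>+ t. ennreal (\<Phi> (x t)) \<partial>M)"

definition orlicz_space :: "'a measure \<Rightarrow> (real \<Rightarrow> real) \<Rightarrow> ('a \<Rightarrow> real) set" where
  "orlicz_space M \<Phi> = {x \<in> borel_measurable M.
      \<exists>c>0. orlicz_modular M \<Phi> (\<lambda>t. c * x t) < \<infinity>}"

(* (1/k) p((1, I_\<Phi>(kx))), with the convention p((1,+\<infinity>)) = +\<infinity> *)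
definition orlicz_p_term :: "'a measure \<Rightarrow> (real \<Rightarrow> real) \<Rightarrow> (real \<times> real \<Rightarrow> real)
    \<Rightarrow> ('a \<Rightarrow> real) \<Rightarrow> real \<Rightarrow> ennreal" where
  "orlicz_p_term M \<Phi> p x k =
     (if orlicz_modular M \<Phi> (\<lambda>t. k * x t) = \<infinity> then \<infinity>
      else ennreal ((1 / k) * p (1, enn2real (orlicz_modular M \<Phi> (\<lambda>t. k * x t)))))"

definition orlicz_p_norm :: "'a measure \<Rightarrow> (real \<Rightarrow> real) \<Rightarrow> (real \<times> real \<Rightarrow> real)
    \<Rightarrow> ('a \<Rightarrow> real) \<Rightarrow> ennreal" where
  "orlicz_p_norm M \<Phi> p x = (INF k\<in>{0<..}. orlicz_p_term M \<Phi> p x k)"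

end

(*
  Write F(k) = (1/k) p(1, I_\<Phi>(kx)).  By Fatou's lemma I_\<Phi> is lower semicontinuous in the
  scaling factor, and p(1,-) is monotone and Lipschitz, so F is lower semicontinuous on (0,\<infinity>).
  Its sublevel sets stay inside a compact interval [a, b] \<subseteq> (0,\<infinity>): F(k) \<ge> p(1,0)/k = 1/k
  keeps k away from 0, and F(k) \<ge> p(0,1) \<Phi>(k\<delta>) \<mu>{|x| \<ge> \<delta>} / k, which tends to \<infinity> by the
  superlinear growth of \<Phi>, keeps k bounded.  A minimizing sequence therefore has a limit point
  in (0,\<infinity>), where F attains its infimum.
*)

theory Submission
  imports Defs
begin

lemma lsc_attains_INF:
  fixes F :: "'a::metric_space \<Rightarrow> ennreal"
  assumes lsc: "\<And>s k l. (\<forall>n. s n \<in> S) \<Longrightarrow> s \<longlonglongrightarrow> k \<Longrightarrow> k \<in> S \<Longrightarrow>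
      (\<lambda>n. F (s n)) \<longlonglongrightarrow> l \<Longrightarrow> F k \<le> l"
    and "compact K" "K \<subseteq> S"
    and below: "(INF k\<in>S. F k) < C"
    and sublevel: "\<And>k. k \<in> S \<Longrightarrow> F k < C \<Longrightarrow> k \<in> K"
  shows "\<exists>l\<in>S. F l = (INF k\<in>S. F k)"
proof -
  have "S \<noteq> {}"
  proof
    assume "S = {}"
    then show False using below by simp
  qed
  then obtain u where "\<forall>n. u n \<in> F ` S" and u: "u \<longlonglongrightarrow> (INF k\<in>S. F k)"
    using Inf_as_limit[of "F ` S"] by auto
  then have "\<forall>n. \<exists>k. k \<in> S \<and> u n = F k" by (simp add: image_iff Bex_def)
  from choice[OF this] obtain s where "\<forall>n. s n \<in> S \<and> u n = F (s n)" ..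
  then have s: "\<And>n. s n \<in> S" and us: "\<And>n. u n = F (s n)" by auto
  obtain N where "\<And>n. n \<ge> N \<Longrightarrow> u n < C"
    using order_tendstoD(2)[OF u below] by (auto simp: eventually_sequentially)
  then have sK: "\<forall>n. s (n + N) \<in> K" using s us sublevel by auto
  from compact_imp_seq_compact[OF \<open>compact K\<close>] sK
  obtain l r where l: "l \<in> K" "strict_mono r" and slim: "((\<lambda>n. s (n + N)) \<circ> r) \<longlonglongrightarrow> l"
    by (rule seq_compactE)
  have "(\<lambda>n. F (s (r n + N))) \<longlonglongrightarrow> (INF k\<in>S. F k)"
    using LIMSEQ_subseq_LIMSEQ[OF LIMSEQ_ignore_initial_segment[OF u, of N] l(2)]
    by (simp add: us o_def)
  then have "F l \<le> (INF k\<in>S. F k)"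
    using slim l(1) \<open>K \<subseteq> S\<close> s by (intro lsc[of "\<lambda>n. s (r n + N)"]) (auto simp: o_def)
  moreover have "(INF k\<in>S. F k) \<le> F l" using l(1) \<open>K \<subseteq> S\<close> by (auto intro: INF_lower)
  ultimately show ?thesis using l(1) \<open>K \<subseteq> S\<close> by (intro bexI[of _ l]) auto
qed

lemma orlicz_function_abs_mono:
  assumes "orlicz_function \<Phi>" "\<bar>a\<bar> \<le> \<bar>b\<bar>"
  shows "\<Phi> a \<le> \<Phi> b"
proof -
  have cv: "convex_on UNIV \<Phi>" and ev: "\<And>u. \<Phi> (-u) = \<Phi> u" and nn: "\<And>u. \<Phi> u \<ge> 0"
    and z: "\<Phi> 0 = 0"
    using assms(1) unfolding orlicz_function_def by auto
  have even_abs: "\<Phi> u = \<Phi> \<bar>u\<bar>" for u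
  proof (cases "u < 0")
    case True
    then show ?thesis using ev[of u] by (simp add: abs_of_neg)
  qed (simp add: abs_of_nonneg)
  show ?thesis
  proof (cases "b = 0")
    case False
    define t where "t = \<bar>a\<bar> / \<bar>b\<bar>"
    have t: "0 \<le> t" "t \<le> 1" using assms(2) False by (auto simp: t_def)
    have "\<Phi> \<bar>a\<bar> = \<Phi> ((1 - t) *\<^sub>R 0 + t *\<^sub>R \<bar>b\<bar>)" using False by (simp add: t_def)
    also have "\<dots> \<le> (1 - t) * \<Phi> 0 + t * \<Phi> \<bar>b\<bar>" using convex_onD[OF cv t] by blast
    also have "\<dots> \<le> \<Phi> \<bar>b\<bar>" using z t nn[of "\<bar>b\<bar>"] by (simp add: mult_left_le_one_le)
    finally show ?thesis using even_abs[of a] even_abs[of b] by linarith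
  qed (use assms(2) in simp)
qed

lemma orlicz_function_continuous: "orlicz_function \<Phi> \<Longrightarrow> continuous_on UNIV \<Phi>"
  by (rule convex_on_continuous) (auto simp: orlicz_function_def)

lemma
  assumes "lattice_norm p"
  shows lattice_norm_eq_0_iff: "p w = 0 \<longleftrightarrow> w = (0, 0)"
    and lattice_norm_homogeneous: "p (c * u, c * v) = \<bar>c\<bar> * p (u, v)"
    and lattice_norm_triangle: "p (u + u', v + v') \<le> p (u, v) + p (u', v')"
    and lattice_norm_mono: "\<bar>u\<bar> \<le> \<bar>u'\<bar> \<Longrightarrow> \<bar>v\<bar> \<le> \<bar>v'\<bar> \<Longrightarrow> p (u, v) \<le> p (u', v')"
proof -
  note L = assms[unfolded lattice_norm_def]
  show "p w = 0 \<longleftrightarrow> w = (0, 0)" by (rule L[THEN conjunct1, rule_format])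
  show "p (c * u, c * v) = \<bar>c\<bar> * p (u, v)"
    by (rule L[THEN conjunct2, THEN conjunct1, rule_format])
  show "p (u + u', v + v') \<le> p (u, v) + p (u', v')"
    by (rule L[THEN conjunct2, THEN conjunct2, THEN conjunct1, rule_format])
  show "\<bar>u\<bar> \<le> \<bar>u'\<bar> \<Longrightarrow> \<bar>v\<bar> \<le> \<bar>v'\<bar> \<Longrightarrow> p (u, v) \<le> p (u', v')"
    by (rule L[THEN conjunct2, THEN conjunct2, THEN conjunct2, rule_format]) (rule conjI)
qed

lemma lattice_norm_pos:
  assumes "lattice_norm p" "v \<noteq> (0, 0)"
  shows "0 < p v"
proof -
  have "p (0, 0) \<le> p v" using lattice_norm_mono[OF assms(1)] by (cases v) auto
  moreover have "p (0, 0) = 0" "p v \<noteq> 0"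
    using lattice_norm_eq_0_iff[OF assms(1)] assms(2) by auto
  ultimately show ?thesis by simp
qed

lemma lattice_norm_zero_fst:
  assumes "lattice_norm p"
  shows "p (0, v) = \<bar>v\<bar> * p (0, 1)"
  using lattice_norm_homogeneous[OF assms, of v 0 1] by simp

lemma lattice_norm_snd_le:
  assumes "lattice_norm p"
  shows "\<bar>v\<bar> * p (0, 1) \<le> p (u, v)"
  using lattice_norm_mono[OF assms, of 0 u v v] by (simp add: lattice_norm_zero_fst[OF assms, of v])

lemma lattice_norm_lipschitz_snd:
  assumes "lattice_norm p"
  shows "\<bar>p (u, v) - p (u, v')\<bar> \<le> \<bar>v - v'\<bar> * p (0, 1)"
proof -
  have tri: "p (u, w + w') \<le> p (u, w) + \<bar>w'\<bar> * p (0, 1)" for w w'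
    using lattice_norm_triangle[OF assms, of u 0 w w']
    by (simp add: lattice_norm_zero_fst[OF assms, of w'])
  show ?thesis using tri[of v' "v - v'"] tri[of v "v' - v"] by (simp add: abs_minus_commute)
qed

lemma lattice_norm_tendsto_snd:
  assumes "lattice_norm p" "(f \<longlongrightarrow> v) F"
  shows "((\<lambda>x. p (u, f x)) \<longlongrightarrow> p (u, v)) F"
proof -
  have "((\<lambda>x. \<bar>f x - v\<bar> * p (0, 1)) \<longlongrightarrow> 0) F"
    using tendsto_mult_left_zero[OF tendsto_rabs_zero[OF LIM_zero[OF assms(2)]]] by simp
  then have "((\<lambda>x. p (u, f x) - p (u, v)) \<longlongrightarrow> 0) F"
    by (rule Lim_null_comparison[rotated]) (simp add: lattice_norm_lipschitz_snd[OF assms(1)])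
  then show ?thesis by (rule LIM_zero_cancel)
qed

lemma orlicz_modular_ge_level_set:
  assumes "orlicz_function \<Phi>" "x \<in> borel_measurable M" "0 \<le> \<delta>"
  shows "ennreal (\<Phi> (k * \<delta>)) * emeasure M {t\<in>space M. \<delta> \<le> \<bar>x t\<bar>}
           \<le> orlicz_modular M \<Phi> (\<lambda>t. k * x t)"
proof -
  let ?A = "{t\<in>space M. \<delta> \<le> \<bar>x t\<bar>}"
  have "?A \<in> sets M" using assms(2) by measurable
  then have "ennreal (\<Phi> (k * \<delta>)) * emeasure M ?A
      = (\<integral>\<^sup>+ t. ennreal (\<Phi> (k * \<delta>)) * indicator ?A t \<partial>M)"
    by (rule nn_integral_cmult_indicator[symmetric])
  also have "\<dots> \<le> (\<integral>\<^sup>+ t. ennreal (\<Phi> (k * x t)) \<partial>M)"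
  proof (rule nn_integral_mono)
    fix t
    show "ennreal (\<Phi> (k * \<delta>)) * indicator ?A t \<le> ennreal (\<Phi> (k * x t))"
    proof (cases "t \<in> ?A")
      case True
      then have "\<bar>k * \<delta>\<bar> \<le> \<bar>k * x t\<bar>"
        unfolding abs_mult using assms(3) by (intro mult_left_mono) auto
      then have "\<Phi> (k * \<delta>) \<le> \<Phi> (k * x t)" by (rule orlicz_function_abs_mono[OF assms(1)])
      then show ?thesis using True by (simp add: ennreal_leI)
    qed simp
  qed
  finally show ?thesis unfolding orlicz_modular_def .
qed

lemma orlicz_modular_le_liminf:
  assumes "orlicz_function \<Phi>" "x \<in> borel_measurable M" "ks \<longlonglongrightarrow> k"
  shows "orlicz_modular M \<Phi> (\<lambda>t. k * x t)
           \<le> liminf (\<lambda>n. orlicz_modular M \<Phi> (\<lambda>t. ks n * x t))"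
proof -
  have cont: "isCont \<Phi> u" for u
    using orlicz_function_continuous[OF assms(1)] by (simp add: continuous_on_eq_continuous_at)
  have "\<Phi> \<in> borel_measurable borel"
    using orlicz_function_continuous[OF assms(1)] by (rule borel_measurable_continuous_onI)
  have "(\<lambda>t. c * x t) \<in> borel_measurable M" for c using assms(2) by measurable
  then have meas: "(\<lambda>t. ennreal (\<Phi> (c * x t))) \<in> borel_measurable M" for c
    using measurable_compose[OF _ measurable_ennreal] measurable_compose[OF _ \<open>\<Phi> \<in> _\<close>]
    by blast
  have liminf_eq: "liminf (\<lambda>n. ennreal (\<Phi> (ks n * x t))) = ennreal (\<Phi> (k * x t))" for t
    using lim_imp_Liminf[OF sequentially_bot
        tendsto_ennrealI[OF isCont_tendsto_compose[OF cont tendsto_mult_right[OF assms(3)]]]] .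
  have "(\<integral>\<^sup>+ t. liminf (\<lambda>n. ennreal (\<Phi> (ks n * x t))) \<partial>M)
      \<le> liminf (\<lambda>n. \<integral>\<^sup>+ t. ennreal (\<Phi> (ks n * x t)) \<partial>M)"
    using meas by (rule nn_integral_liminf)
  then show ?thesis unfolding orlicz_modular_def liminf_eq .
qed

lemma not_AE_zero_level_set:
  fixes x :: "'a \<Rightarrow> real"
  assumes "x \<in> borel_measurable M" "\<not> (AE t in M. x t = 0)"
  shows "\<exists>\<delta>>0. emeasure M {t\<in>space M. \<delta> \<le> \<bar>x t\<bar>} \<noteq> 0"
proof (rule ccontr)
  assume "\<not> ?thesis"
  then have "emeasure M {t\<in>space M. inverse (real (Suc n)) \<le> \<bar>x t\<bar>} = 0" for n
    by simp
  moreover have "{t\<in>space M. inverse (real (Suc n)) \<le> \<bar>x t\<bar>} \<in> sets M" for n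
    using assms(1) by measurable
  ultimately have "(\<Union>n. {t\<in>space M. inverse (real (Suc n)) \<le> \<bar>x t\<bar>}) \<in> null_sets M"
    by (intro null_sets_UN null_setsI)
  moreover have "{t\<in>space M. x t \<noteq> 0}
      \<subseteq> (\<Union>n. {t\<in>space M. inverse (real (Suc n)) \<le> \<bar>x t\<bar>})"
  proof
    fix t assume t: "t \<in> {t\<in>space M. x t \<noteq> 0}"
    then obtain n where "inverse (real (Suc n)) < \<bar>x t\<bar>"
      using reals_Archimedean[of "\<bar>x t\<bar>"] by auto
    with t show "t \<in> (\<Union>n. {t\<in>space M. inverse (real (Suc n)) \<le> \<bar>x t\<bar>})"
      using less_imp_le by blast
  qed
  ultimately have "AE t in M. x t = 0" by (rule AE_I')
  with assms(2) show False ..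
qed

lemma orlicz_p_term_ge_inverse:
  assumes "lattice_norm p" "p (1, 0) = 1" "0 < k"
  shows "ennreal (1 / k) \<le> orlicz_p_term M \<Phi> p x k"
proof -
  have one: "1 \<le> p (1, J)" for J
    using lattice_norm_mono[OF assms(1), of 1 1 0 J] assms(2) by simp
  have "1 / k \<le> 1 / k * p (1, J)" for J
    using divide_right_mono[OF one[of J], of k] assms(3) by simp
  then show ?thesis by (simp add: orlicz_p_term_def ennreal_leI)
qed

lemma orlicz_p_term_ge_modular:
  assumes "lattice_norm p" "0 < k"
  shows "ennreal (p (0, 1) / k) * orlicz_modular M \<Phi> (\<lambda>t. k * x t)
           \<le> orlicz_p_term M \<Phi> p x k"
proof (cases "orlicz_modular M \<Phi> (\<lambda>t. k * x t)")
  case (real J)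
  have "ennreal (p (0, 1) / k) * ennreal J = ennreal (p (0, 1) / k * J)"
    using lattice_norm_pos[OF assms(1), of "(0, 1)"] assms(2) real(1)
    by (simp add: ennreal_mult[symmetric])
  also have "\<dots> \<le> ennreal (1 / k * p (1, J))"
    using lattice_norm_snd_le[OF assms(1), of J 1] real(1) assms(2)
    by (intro ennreal_leI) (simp add: field_simps)
  finally show ?thesis using real by (simp add: orlicz_p_term_def)
qed (simp add: orlicz_p_term_def)

lemma orlicz_p_term_sublevel_bounded:
  assumes p: "lattice_norm p" "p (1, 0) = 1"
    and \<Phi>: "orlicz_function \<Phi>" "filterlim (\<lambda>u. \<Phi> u / u) at_top at_top"
    and x: "x \<in> borel_measurable M" "\<not> (AE t in M. x t = 0)"
  shows "\<exists>a b. 0 < a \<and>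
           (\<forall>k>0. orlicz_p_term M \<Phi> p x k < ennreal c \<longrightarrow> a \<le> k \<and> k \<le> b)"
proof -
  obtain \<delta> where \<delta>: "0 < \<delta>" "emeasure M {t\<in>space M. \<delta> \<le> \<bar>x t\<bar>} \<noteq> 0"
    using not_AE_zero_level_set[OF x] by blast
  define \<mu> where "\<mu> = enn2real (min (emeasure M {t\<in>space M. \<delta> \<le> \<bar>x t\<bar>}) 1)"
  have \<mu>: "0 < \<mu>" "ennreal \<mu> \<le> emeasure M {t\<in>space M. \<delta> \<le> \<bar>x t\<bar>}"
    using \<delta>(2)
    by (auto simp: \<mu>_def enn2real_positive_iff min_less_iff_disj zero_less_iff_neq_zero)
  define q where "q = p (0, 1)"
  have q: "0 < q" using lattice_norm_pos[OF p(1)] by (simp add: q_def)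
  obtain U where U: "\<And>u. U \<le> u \<Longrightarrow> c / (\<delta> * \<mu> * q) \<le> \<Phi> u / u"
    using \<Phi>(2) unfolding filterlim_at_top eventually_at_top_linorder by blast
  have "k \<le> max U 1 / \<delta>" if k: "0 < k" "orlicz_p_term M \<Phi> p x k < ennreal c" for k
  proof (rule ccontr)
    assume "\<not> ?thesis"
    then have u: "max U 1 < k * \<delta>" using \<delta>(1) by (simp add: pos_divide_less_eq not_le)
    then have "c / (\<delta> * \<mu> * q) * (k * \<delta>) \<le> \<Phi> (k * \<delta>)"
      using U[of "k * \<delta>"] by (simp add: pos_le_divide_eq)
    then have "q / k * (c / (\<delta> * \<mu> * q) * (k * \<delta>) * \<mu>) \<le> q / k * (\<Phi> (k * \<delta>) * \<mu>)"
      using k(1) \<mu>(1) q by (intro mult_left_mono mult_right_mono) auto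
    moreover have "q / k * (c / (\<delta> * \<mu> * q) * (k * \<delta>) * \<mu>) = c"
      using k(1) \<delta>(1) \<mu>(1) q by (simp add: field_simps)
    ultimately have "ennreal c \<le> ennreal (q / k * (\<Phi> (k * \<delta>) * \<mu>))"
      by (simp add: ennreal_leI)
    also have "\<dots> = ennreal (q / k) * (ennreal (\<Phi> (k * \<delta>)) * ennreal \<mu>)"
      using k(1) q \<mu>(1) \<Phi>(1)[unfolded orlicz_function_def]
      by (simp add: ennreal_mult[symmetric] ac_simps)
    also have "\<dots> \<le> ennreal (q / k)
        * (ennreal (\<Phi> (k * \<delta>)) * emeasure M {t\<in>space M. \<delta> \<le> \<bar>x t\<bar>})"
      using \<mu>(2) by (intro mult_left_mono) auto
    also have "\<dots> \<le> orlicz_p_term M \<Phi> p x k"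
      using order_trans[OF mult_left_mono[OF orlicz_modular_ge_level_set[OF \<Phi>(1) x(1)
          less_imp_le[OF \<delta>(1)]] zero_le] orlicz_p_term_ge_modular[OF p(1) k(1)]]
      unfolding q_def .
    finally show False using k(2) by simp
  qed
  moreover have "1 / max c 1 \<le> k" if k: "0 < k" "orlicz_p_term M \<Phi> p x k < ennreal c" for k
  proof -
    have "ennreal (1 / k) < ennreal c"
      using orlicz_p_term_ge_inverse[OF p k(1)] k(2) by (rule le_less_trans)
    then have "1 / k < max c 1"
      using k(1) by (simp add: ennreal_less_iff less_max_iff_disj)
    then show ?thesis using k(1) by (simp add: field_simps)
  qed
  ultimately show ?thesis by (intro exI[of _ "1 / max c 1"] exI[of _ "max U 1 / \<delta>"]) auto
qed

lemma orlicz_p_term_le_of_tendsto: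
  assumes "lattice_norm p" "orlicz_function \<Phi>" "x \<in> borel_measurable M"
    and "ks \<longlonglongrightarrow> k" "0 < k"
    and I: "\<And>n. orlicz_modular M \<Phi> (\<lambda>t. ks n * x t) = ennreal (J n)" and "J \<longlonglongrightarrow> j"
  shows "orlicz_p_term M \<Phi> p x k \<le> ennreal (p (1, j) / k)"
proof -
  have "orlicz_modular M \<Phi> (\<lambda>t. k * x t) \<le> liminf (\<lambda>n. ennreal (J n))"
    using orlicz_modular_le_liminf[OF assms(2-4)] by (simp add: I)
  also have "\<dots> = ennreal j"
    using \<open>J \<longlonglongrightarrow> j\<close> by (intro lim_imp_Liminf tendsto_ennrealI) auto
  finally have Ik: "orlicz_modular M \<Phi> (\<lambda>t. k * x t) \<le> ennreal j" .
  have "\<bar>enn2real (orlicz_modular M \<Phi> (\<lambda>t. k * x t))\<bar> \<le> \<bar>j\<bar>"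
  proof (cases "0 \<le> j")
    case True
    then show ?thesis using enn2real_leI[OF True Ik] by simp
  qed (use Ik in \<open>simp add: ennreal_neg\<close>)
  then have "p (1, enn2real (orlicz_modular M \<Phi> (\<lambda>t. k * x t))) \<le> p (1, j)"
    by (intro lattice_norm_mono[OF assms(1)]) auto
  with Ik \<open>0 < k\<close> show ?thesis
    by (auto simp: orlicz_p_term_def top_unique intro!: ennreal_leI divide_right_mono)
qed

(* Along a sequence with finite limit the modulars I_\<Phi>(k_n x) are bounded, so they converge
   along a subsequence; Fatou's lemma then bounds I_\<Phi>(kx) by that limit. *)
lemma orlicz_p_term_lsc:
  assumes p: "lattice_norm p" and \<Phi>: "orlicz_function \<Phi>" and x: "x \<in> borel_measurable M"
    and ks: "\<And>n. 0 < ks n" "ks \<longlonglongrightarrow> k" "0 < k"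
    and F: "(\<lambda>n. orlicz_p_term M \<Phi> p x (ks n)) \<longlonglongrightarrow> L"
  shows "orlicz_p_term M \<Phi> p x k \<le> L"
proof (cases L)
  case (real l)
  have "L < ennreal (l + 1)" using real by (simp add: ennreal_lessI)
  then obtain N where N: "\<And>n. N \<le> n \<Longrightarrow> orlicz_p_term M \<Phi> p x (ks n) < ennreal (l + 1)"
    using order_tendstoD(2)[OF F] unfolding eventually_sequentially by blast
  define ks' where "ks' n = ks (n + N)" for n
  define J where "J n = enn2real (orlicz_modular M \<Phi> (\<lambda>t. ks' n * x t))" for n
  have F': "orlicz_p_term M \<Phi> p x (ks' n) < ennreal (l + 1)" for n
    using N by (simp add: ks'_def)
  have I: "orlicz_modular M \<Phi> (\<lambda>t. ks' n * x t) = ennreal (J n)" for n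
    using F'[of n]
    by (cases "orlicz_modular M \<Phi> (\<lambda>t. ks' n * x t)") (auto simp: J_def orlicz_p_term_def)
  have J_nonneg: "0 \<le> J n" for n by (simp add: J_def)
  have F'_eq: "orlicz_p_term M \<Phi> p x (ks' n) = ennreal (p (1, J n) / ks' n)" for n
    using I[of n] J_nonneg[of n] by (simp add: orlicz_p_term_def)
  have ks'_lim: "ks' \<longlonglongrightarrow> k"
    unfolding ks'_def[abs_def] by (rule LIMSEQ_ignore_initial_segment[OF ks(2)])
  obtain K where K: "\<And>n. \<bar>ks' n\<bar> \<le> K"
    using convergent_imp_Bseq[OF convergentI[OF ks'_lim]]
    unfolding Bseq_def real_norm_def by blast
  have J_bound: "\<forall>n. J n \<in> {0 .. (l + 1) * K / p (0, 1)}"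
  proof
    fix n
    have pos: "0 < ks' n" "0 < p (0, 1)"
      using ks(1) lattice_norm_pos[OF p] by (auto simp: ks'_def)
    have "J n * p (0, 1) / ks' n \<le> p (1, J n) / ks' n"
      using lattice_norm_snd_le[OF p, of "J n" 1] pos by (simp add: J_def divide_right_mono)
    also have "\<dots> < l + 1"
      using F'[of n] pos lattice_norm_pos[OF p, of "(1, J n)"]
      by (simp add: F'_eq ennreal_less_iff)
    finally have "J n * p (0, 1) < (l + 1) * ks' n" using pos by (simp add: field_simps)
    also have "\<dots> \<le> (l + 1) * K" using K[of n] real by (intro mult_left_mono) auto
    finally show "J n \<in> {0 .. (l + 1) * K / p (0, 1)}"
      using pos by (simp add: J_def field_simps)
  qed
  from compact_imp_seq_compact[OF compact_Icc] J_bound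
  obtain j r where "j \<in> {0 .. (l + 1) * K / p (0, 1)}" and r: "strict_mono r"
    and J_lim: "(J \<circ> r) \<longlonglongrightarrow> j"
    by (rule seq_compactE)
  have ksr_lim: "(ks' \<circ> r) \<longlonglongrightarrow> k" using LIMSEQ_subseq_LIMSEQ[OF ks'_lim r] .
  have "orlicz_p_term M \<Phi> p x k \<le> ennreal (p (1, j) / k)"
    by (rule orlicz_p_term_le_of_tendsto[OF p \<Phi> x ksr_lim ks(3) _ J_lim]) (simp add: I)
  moreover have "ennreal (p (1, j) / k) = L"
  proof (rule LIMSEQ_unique)
    have "(\<lambda>n. p (1, J (r n)) / ks' (r n)) \<longlonglongrightarrow> p (1, j) / k"
      using tendsto_divide[OF lattice_norm_tendsto_snd[OF p J_lim[unfolded o_def]]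
          ksr_lim[unfolded o_def]] ks(3) by simp
    then show "(\<lambda>n. orlicz_p_term M \<Phi> p x (ks' (r n))) \<longlonglongrightarrow> ennreal (p (1, j) / k)"
      unfolding F'_eq by (rule tendsto_ennrealI)
    show "(\<lambda>n. orlicz_p_term M \<Phi> p x (ks' (r n))) \<longlonglongrightarrow> L"
      using LIMSEQ_subseq_LIMSEQ[OF LIMSEQ_ignore_initial_segment[OF F, of N] r]
      by (simp add: ks'_def o_def)
  qed
  ultimately show ?thesis by simp
qed simp_all

theorem lemma1:
  fixes M :: "'a measure" and \<Phi> :: "real \<Rightarrow> real" and p :: "real \<times> real \<Rightarrow> real"
    and x :: "'a \<Rightarrow> real"
  assumes "sigma_finite_measure M" and "complete_measure M"
    and "lattice_norm p" and "p (1, 0) = 1"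
    and "orlicz_function \<Phi>"
    and "filterlim (\<lambda>u. \<Phi> u / u) at_top at_top"
    and "x \<in> orlicz_space M \<Phi>"
    and "\<not> (AE t in M. x t = 0)"
  shows "\<exists>l>0. orlicz_p_norm M \<Phi> p x = orlicz_p_term M \<Phi> p x l"
proof -
  let ?F = "orlicz_p_term M \<Phi> p x"
  have x: "x \<in> borel_measurable M" using assms(7) by (simp add: orlicz_space_def)
  obtain c where "0 < c" "orlicz_modular M \<Phi> (\<lambda>t. c * x t) < \<infinity>"
    using assms(7) by (auto simp: orlicz_space_def)
  then have "(INF k\<in>{0<..}. ?F k) < \<infinity>"
    by (intro le_less_trans[OF INF_lower[of c]]) (auto simp: orlicz_p_term_def)
  then obtain m where m: "(INF k\<in>{0<..}. ?F k) = ennreal m" "0 \<le> m"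
    by (cases "INF k\<in>{0<..}. ?F k") auto
  obtain a b
    where ab: "0 < a" "\<And>k. 0 < k \<Longrightarrow> ?F k < ennreal (m + 1) \<Longrightarrow> a \<le> k \<and> k \<le> b"
    using orlicz_p_term_sublevel_bounded[OF assms(3-6) x assms(8)] by blast
  have "\<exists>l\<in>{0<..}. ?F l = (INF k\<in>{0<..}. ?F k)"
  proof (rule lsc_attains_INF[where K = "{a..b}" and C = "ennreal (m + 1)"])
    fix s k l
    assume "\<forall>n. s n \<in> {0<..}" "s \<longlonglongrightarrow> k" "k \<in> {0<..}" "(\<lambda>n. ?F (s n)) \<longlonglongrightarrow> l"
    then show "?F k \<le> l" by (intro orlicz_p_term_lsc[OF assms(3,5) x]) auto
  next
    show "(INF k\<in>{0<..}. ?F k) < ennreal (m + 1)" using m by (simp add: ennreal_lessI)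
  next
    fix k
    assume "k \<in> {0<..}" "?F k < ennreal (m + 1)"
    then show "k \<in> {a..b}" using ab(2) by simp
  qed (use ab(1) in auto)
  then show ?thesis by (auto simp: orlicz_p_norm_def)
qed

end
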